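(* Let $n\ge1$, $s\in(0,1)$. There exist $\gamma\in(0,1)$ and $C>0$, both independent of $u$, such that for every $r\in(0,1]$ and every measurable $u$ on $B_r$ with $e^u\in L^2(B_r)$, the functions $$\overline{v}(x,t):=C(n,s)\int_{B_r}\frac{e^{u(y)}}{(|x-y|^2+t^2)^{\frac{n-2s}{2}}}dy,\qquad v(x):=\overline{v}(x,0),$$ satisfy $$\|t^{\frac{1-2s}{2}}\overline{v}\|_{L^2(D_r)}+\|v\|_{L^2(B_r)}\leq C\|e^u\|_{L^1(B_r)}^{\gamma}\|e^u\|_{L^2(B_r)}^{1-\gamma}.$$
   Context: $C(n,s)>0$ is a fixed constant depending only on $n,s$ (chosen so that $-\lim_{t\to0}t^{1-2s}\partial_t\overline v=\kappa_se^u$ on $B_r$, $\kappa_s=\frac{\Gamma(1-s)}{2^{2s-1}\Gamma(s)}$). $B_r$ is the ball of radius $r$ centered at $0$ in $\mathbb{R}^n$, $D_r=B^{n+1}_r(0)\cap(\mathbb{R}^n\times[0,\infty))$ with $B^{n+1}_r(0)$ the ball in $\mathbb{R}^{n+1}$; points of $\mathbb{R}^{n+1}_+$ are written $(x,t)$. *)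

theory Defs
  imports "HOL-Analysis.Analysis"
begin

definition vbar :: "real \<Rightarrow> real \<Rightarrow> real \<Rightarrow> ('a::euclidean_space \<Rightarrow> real) \<Rightarrow> 'a \<times> real \<Rightarrow> ennreal" where
  "vbar c s r u p = ennreal c * (\<integral>\<^sup>+ y \<in> ball 0 r.
      ennreal (exp (u y) / ((norm (fst p - y))\<^sup>2 + (snd p)\<^sup>2) powr ((real DIM('a) - 2 * s) / 2)) \<partial>lborel)"

definition half_ball :: "real \<Rightarrow> ('a::euclidean_space \<times> real) set" where
  "half_ball r = {p. p \<in> ball 0 r \<and> snd p \<ge> 0}"

end

theory Submission
  imports Defs
begin

(*
  For 0 <= t <= 1 and x, y in B_r with r <= 1 the kernel (|x - y|^2 + t^2)^(-(n-2s)/2) is at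
  most a constant times the Riesz kernel |x - y|^(s-n), and the weight t^(1-2s) is integrable
  on [0,1].  Both norms are therefore bounded by the L^2(B_r) norm of the Riesz potential I_s f
  of f = 1_{B_r} e^u.  This is estimated by Hedberg's splitting of the kernel at a radius delta:
  the part supported in B_delta has L^1 norm of order delta^s, so by Young's inequality it
  contributes delta^s ||f||_2 in L^2, while outside B_delta the kernel is at most delta^(s-n),
  which contributes delta^(s-n) ||f||_1 pointwise.  Choosing delta = (||f||_1 / ||f||_2)^(1/n)
  makes both terms equal to ||f||_1^(s/n) ||f||_2^(1-s/n), so gamma = s/n.
*)

lemma nn_integral_lborel_affine:
  fixes f :: "'a::euclidean_space \<Rightarrow> ennreal" and t :: 'a and c :: real
  assumes [measurable]: "f \<in> borel_measurable borel" and c: "c \<noteq> 0"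
  shows "(\<integral>\<^sup>+x. f x \<partial>lborel) = ennreal (\<bar>c\<bar> ^ DIM('a)) * (\<integral>\<^sup>+x. f (t + c *\<^sub>R x) \<partial>lborel)"
  by (subst lborel_affine[OF c, of t]) (simp add: nn_integral_density nn_integral_distr nn_integral_cmult)

lemma nn_integral_convolution_square_le:
  fixes f g :: "'a::euclidean_space \<Rightarrow> real"
  assumes [measurable]: "f \<in> borel_measurable borel" "g \<in> borel_measurable borel"
    and f_nonneg: "\<And>y. 0 \<le> f y" and g_nonneg: "\<And>z. 0 \<le> g z"
  shows "(\<integral>\<^sup>+x. (\<integral>\<^sup>+y. ennreal (f y * g (x - y)) \<partial>lborel)\<^sup>2 \<partial>lborel)
    \<le> (\<integral>\<^sup>+z. ennreal (g z) \<partial>lborel)\<^sup>2 * (\<integral>\<^sup>+y. ennreal ((f y)\<^sup>2) \<partial>lborel)"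
proof -
  define I where "I = (\<integral>\<^sup>+z. ennreal (g z) \<partial>lborel)"
  have reflect: "(\<integral>\<^sup>+y. ennreal (g (x - y)) \<partial>lborel) = I" for x
    using nn_integral_lborel_affine[of "\<lambda>z. ennreal (g z)" "-1" x] by (simp add: I_def)
  have translate: "(\<integral>\<^sup>+x. ennreal (g (x - y)) \<partial>lborel) = I" for y
    using nn_integral_lborel_affine[of "\<lambda>z. ennreal (g z)" 1 "-y"] by (simp add: I_def)
  have pointwise: "(\<integral>\<^sup>+y. ennreal (f y * g (x - y)) \<partial>lborel)\<^sup>2
      \<le> (\<integral>\<^sup>+y. ennreal ((f y)\<^sup>2 * g (x - y)) \<partial>lborel) * I" for x
  proof -
    let ?F = "\<lambda>y. ennreal (f y * sqrt (g (x - y)))" and ?H = "\<lambda>y. ennreal (sqrt (g (x - y)))"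
    have "(\<integral>\<^sup>+y. ennreal (f y * g (x - y)) \<partial>lborel) = (\<integral>\<^sup>+y. ?F y * ?H y \<partial>lborel)"
      using f_nonneg g_nonneg
      by (intro nn_integral_cong) (simp add: ennreal_mult[symmetric] mult.assoc flip: power2_eq_square)
    moreover have "(\<integral>\<^sup>+y. ?F y ^ 2 \<partial>lborel) = (\<integral>\<^sup>+y. ennreal ((f y)\<^sup>2 * g (x - y)) \<partial>lborel)"
      using f_nonneg g_nonneg by (intro nn_integral_cong) (simp add: ennreal_power power_mult_distrib)
    moreover have "(\<integral>\<^sup>+y. ?H y ^ 2 \<partial>lborel) = I"
      using g_nonneg by (simp add: ennreal_power reflect)
    ultimately show ?thesis
      using Cauchy_Schwarz_nn_integral[of ?F lborel ?H] by simp
  qed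
  have inner: "(\<integral>\<^sup>+x. ennreal ((f y)\<^sup>2 * g (x - y)) \<partial>lborel) = ennreal ((f y)\<^sup>2) * I" for y
    using g_nonneg by (simp add: ennreal_mult nn_integral_cmult translate)
  have "(\<integral>\<^sup>+x. (\<integral>\<^sup>+y. ennreal (f y * g (x - y)) \<partial>lborel)\<^sup>2 \<partial>lborel)
      \<le> (\<integral>\<^sup>+x. (\<integral>\<^sup>+y. ennreal ((f y)\<^sup>2 * g (x - y)) \<partial>lborel) * I \<partial>lborel)"
    by (intro nn_integral_mono pointwise)
  also have "\<dots> = (\<integral>\<^sup>+y. (\<integral>\<^sup>+x. ennreal ((f y)\<^sup>2 * g (x - y)) \<partial>lborel) \<partial>lborel) * I"
    by (simp add: nn_integral_multc lborel_pair.Fubini'[of "\<lambda>x y. ennreal ((f y)\<^sup>2 * g (x - y))"])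
  also have "\<dots> = I\<^sup>2 * (\<integral>\<^sup>+y. ennreal ((f y)\<^sup>2) \<partial>lborel)"
    unfolding inner by (simp add: nn_integral_multc nn_integral_cmult power2_eq_square ac_simps)
  finally show ?thesis unfolding I_def .
qed

lemma ennreal_add_square_le:
  fixes a b :: ennreal
  shows "(a + b)\<^sup>2 \<le> 2 * a\<^sup>2 + 2 * b\<^sup>2"
proof (cases "a = \<infinity> \<or> b = \<infinity>")
  case False
  then obtain x y where xy: "a = ennreal x" "b = ennreal y" "0 \<le> x" "0 \<le> y"
    by (metis ennreal_cases ennreal_0 infinity_ennreal_def)
  have "(a + b)\<^sup>2 = ennreal ((x + y)\<^sup>2)"
    using xy by (simp add: ennreal_power flip: ennreal_plus)
  also have "\<dots> \<le> ennreal (2 * x\<^sup>2 + 2 * y\<^sup>2)"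
    using sum_squares_bound[of x y] by (intro ennreal_leI) (simp add: power2_sum)
  also have "\<dots> = 2 * a\<^sup>2 + 2 * b\<^sup>2"
    using xy by (simp add: ennreal_power ennreal_mult)
  finally show ?thesis .
qed (auto simp: power2_eq_square)

lemma sqrt_enn2real_le:
  fixes a :: ennreal and X :: real
  assumes "a \<le> ennreal (X\<^sup>2)" "0 \<le> X"
  shows "a < \<infinity>" and "sqrt (enn2real a) \<le> X"
proof -
  show "a < \<infinity>"
    using assms(1) by (simp add: le_less_trans)
  have "enn2real a \<le> X\<^sup>2"
    using assms by (intro enn2real_leI) auto
  then show "sqrt (enn2real a) \<le> X"
    using assms(2) real_sqrt_le_mono by fastforce
qed

lemma set_nn_integral_eq_set_integral_pos:
  fixes f :: "'a \<Rightarrow> real"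
  assumes [measurable]: "(\<lambda>x. indicator A x * f x) \<in> borel_measurable M" "A \<in> sets M"
    and "emeasure M A \<noteq> 0" and f_pos: "\<And>x. x \<in> A \<Longrightarrow> 0 < f x"
    and finite: "(\<integral>\<^sup>+x. ennreal (indicator A x * f x) \<partial>M) < \<infinity>"
  shows "(\<integral>\<^sup>+x. ennreal (indicator A x * f x) \<partial>M) = ennreal (LINT x:A|M. f x)"
    and "0 < (LINT x:A|M. f x)"
proof -
  have nonneg: "0 \<le> indicator A x * f x" for x
    using f_pos[of x] by (simp add: indicator_def less_imp_le)
  have "(LINT x:A|M. f x) = enn2real (\<integral>\<^sup>+x. ennreal (indicator A x * f x) \<partial>M)"
    unfolding set_lebesgue_integral_def using nonneg by (simp add: integral_eq_nn_integral)
  then show eq: "(\<integral>\<^sup>+x. ennreal (indicator A x * f x) \<partial>M) = ennreal (LINT x:A|M. f x)"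
    using finite by simp
  have "{x \<in> space M. ennreal (indicator A x * f x) \<noteq> 0} = A"
    using f_pos sets.sets_into_space[OF assms(2)] by (force simp: indicator_def)
  then have "(\<integral>\<^sup>+x. ennreal (indicator A x * f x) \<partial>M) \<noteq> 0"
    using assms(3) by (subst nn_integral_0_iff) simp_all
  then show "0 < (LINT x:A|M. f x)"
    using eq nonneg by (simp add: set_lebesgue_integral_def integral_nonneg_AE less_le)
qed

section \<open>Riesz potentials\<close>

lemma dyadic_shell_exists:
  fixes d \<rho> :: real
  assumes "0 < d" "d < \<rho>"
  obtains k :: nat where "\<rho> / 2 ^ Suc k < d" "d \<le> \<rho> / 2 ^ k"
proof -
  obtain m where "(1 / 2 :: real) ^ m < d / \<rho>"
    using real_arch_pow_inv[of "d / \<rho>" "1 / 2 :: real"] assms by auto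
  then have "\<rho> / 2 ^ m < d"
    using assms by (simp add: field_simps power_divide)
  moreover have "\<not> \<rho> / 2 ^ 0 < d"
    using assms by simp
  ultimately obtain k where "\<not> \<rho> / 2 ^ k < d" "\<rho> / 2 ^ Suc k < d"
    using exists_least_lemma[of "\<lambda>k. \<rho> / 2 ^ k < d"] by blast
  then show thesis
    by (intro that) auto
qed

lemma dyadic_powr_product:
  fixes \<rho> \<beta> :: real and k n :: nat
  assumes "0 < \<rho>"
  shows "(\<rho> / 2 ^ Suc k) powr (\<beta> - n) * (\<rho> / 2 ^ k) ^ n = 2 powr (n - \<beta>) * \<rho> powr \<beta> * (2 powr (- \<beta>)) ^ k"
proof -
  define R where "R = \<rho> / 2 ^ k"
  have R: "0 < R" "\<rho> / 2 ^ Suc k = R / 2"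
    using assms by (simp_all add: R_def)
  have "(R / 2) powr (\<beta> - n) * R ^ n = 2 powr (n - \<beta>) * R powr \<beta>"
    using R by (simp add: powr_divide powr_realpow[symmetric] powr_minus_divide diff_divide_distrib
      field_simps flip: powr_add powr_diff)
  moreover have "R powr \<beta> = \<rho> powr \<beta> * (2 powr (- \<beta>)) ^ k"
    using assms by (simp add: R_def powr_divide powr_minus_divide powr_realpow[symmetric] powr_powr
      mult.commute flip: powr_realpow)
  ultimately show ?thesis
    unfolding R(2) by (simp add: R_def)
qed

lemma norm_powr_le_dyadic_sum:
  fixes z :: "'a::real_normed_vector" and \<rho> \<beta> :: real
  assumes \<rho>: "0 < \<rho>" and \<beta>: "\<beta> \<le> 0"
  shows "ennreal (norm z powr \<beta>) * indicator (ball 0 \<rho>) z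
    \<le> (\<Sum>k. ennreal ((\<rho> / 2 ^ Suc k) powr \<beta>) * indicator (cball 0 (\<rho> / 2 ^ k)) z)"
proof (cases "z \<in> ball 0 \<rho> \<and> z \<noteq> 0")
  case True
  then obtain k where k: "\<rho> / 2 ^ Suc k < norm z" "norm z \<le> \<rho> / 2 ^ k"
    using dyadic_shell_exists[of "norm z" \<rho>] by auto
  have "norm z powr \<beta> \<le> (\<rho> / 2 ^ Suc k) powr \<beta>"
    using k \<beta> \<rho> by (intro powr_mono2') auto
  then have "ennreal (norm z powr \<beta>) * indicator (ball 0 \<rho>) z
      \<le> ennreal ((\<rho> / 2 ^ Suc k) powr \<beta>) * indicator (cball 0 (\<rho> / 2 ^ k)) z"
    using True k by (auto simp: indicator_def intro: ennreal_leI)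
  also have "\<dots> \<le> (\<Sum>k. ennreal ((\<rho> / 2 ^ Suc k) powr \<beta>) * indicator (cball 0 (\<rho> / 2 ^ k)) z)"
    using sum_le_suminf[OF summableI, of "{k}"] by simp
  finally show ?thesis .
qed auto

text \<open>The integral of \<open>|z| powr (\<alpha> - n)\<close> over \<open>ball 0 \<rho>\<close> is bounded shell by shell:
  on \<open>\<rho>/2^(k+1) < |z| \<le> \<rho>/2^k\<close> the integrand is at most \<open>(\<rho>/2^(k+1)) powr (\<alpha> - n)\<close>,
  and summing against the volumes of the balls of radius \<open>\<rho>/2^k\<close> gives a geometric series
  with ratio \<open>2 powr (-\<alpha>)\<close>.\<close>
definition riesz_ball_const :: "nat \<Rightarrow> real \<Rightarrow> real" where
  "riesz_ball_const n \<alpha> = unit_ball_vol n * 2 powr (n - \<alpha>) / (1 - 2 powr (- \<alpha>))"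

lemma riesz_ball_const_nonneg:
  assumes "0 < \<alpha>"
  shows "0 \<le> riesz_ball_const n \<alpha>"
  using assms by (simp add: riesz_ball_const_def powr_less_one less_imp_le)

lemma nn_integral_ball_norm_powr_le:
  fixes \<rho> \<alpha> :: real
  assumes \<rho>: "0 < \<rho>" and \<alpha>: "0 < \<alpha>" "\<alpha> < DIM('a::euclidean_space)"
  shows "(\<integral>\<^sup>+z\<in>ball (0::'a) \<rho>. ennreal (norm z powr (\<alpha> - DIM('a))) \<partial>lborel)
    \<le> ennreal (riesz_ball_const DIM('a) \<alpha> * \<rho> powr \<alpha>)"
proof -
  define n where "n = DIM('a)"
  define q where "q = (2::real) powr (- \<alpha>)"
  define c where "c k = (\<rho> / 2 ^ Suc k) powr (\<alpha> - n)" for k :: nat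
  define a where "a = unit_ball_vol n * 2 powr (n - \<alpha>) * \<rho> powr \<alpha>"
  have q: "0 < q" "q < 1"
    using \<alpha> by (simp_all add: q_def powr_less_one)
  have a: "0 \<le> a"
    by (simp add: a_def)
  have dominated: "ennreal (norm z powr (\<alpha> - n)) * indicator (ball 0 \<rho>) z
      \<le> (\<Sum>k. ennreal (c k) * indicator (cball 0 (\<rho> / 2 ^ k)) z)" for z :: 'a
    unfolding c_def using norm_powr_le_dyadic_sum[OF \<rho>, of "\<alpha> - n" z] \<alpha> by (simp add: n_def)
  have "(\<integral>\<^sup>+z\<in>ball (0::'a) \<rho>. ennreal (norm z powr (\<alpha> - n)) \<partial>lborel)
      \<le> (\<integral>\<^sup>+z. (\<Sum>k. ennreal (c k) * indicator (cball (0::'a) (\<rho> / 2 ^ k)) z) \<partial>lborel)"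
    by (rule nn_integral_mono) (rule dominated)
  also have "\<dots> = (\<Sum>k. \<integral>\<^sup>+z. ennreal (c k) * indicator (cball (0::'a) (\<rho> / 2 ^ k)) z \<partial>lborel)"
    by (rule nn_integral_suminf) (auto intro!: borel_measurable_times_ennreal borel_measurable_indicator)
  also have "\<dots> = (\<Sum>k. ennreal (c k) * emeasure lborel (cball (0::'a) (\<rho> / 2 ^ k)))"
    by (intro suminf_cong nn_integral_cmult_indicator) simp
  also have "\<dots> = (\<Sum>k. ennreal (a * q ^ k))"
  proof (intro suminf_cong)
    fix k
    have "c k * (unit_ball_vol n * (\<rho> / 2 ^ k) ^ DIM('a)) = a * q ^ k"
      using dyadic_powr_product[OF \<rho>, of k \<alpha> "DIM('a)"] by (simp add: c_def a_def q_def n_def mult_ac)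
    then show "ennreal (c k) * emeasure lborel (cball (0::'a) (\<rho> / 2 ^ k)) = ennreal (a * q ^ k)"
      using \<rho> by (simp add: emeasure_cball c_def n_def ennreal_mult[symmetric])
  qed
  also have "\<dots> = ennreal (a * (1 / (1 - q)))"
    using q a by (intro suminf_ennreal_eq sums_mult geometric_sums) auto
  finally show ?thesis
    by (simp add: riesz_ball_const_def a_def q_def n_def field_simps)
qed

text \<open>Since \<open>0 powr a = 0\<close>, the kernel is \<open>0\<close> on the diagonal \<open>y = x\<close>; this only
  changes the integrand on a null set.\<close>
definition riesz_potential :: "real \<Rightarrow> ('a::euclidean_space \<Rightarrow> real) \<Rightarrow> 'a \<Rightarrow> ennreal" where
  "riesz_potential \<alpha> f x = (\<integral>\<^sup>+y. ennreal (f y * norm (x - y) powr (\<alpha> - DIM('a))) \<partial>lborel)"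

lemma borel_measurable_riesz_potential [measurable]:
  fixes f :: "'a::euclidean_space \<Rightarrow> real"
  assumes [measurable]: "f \<in> borel_measurable borel"
  shows "riesz_potential \<alpha> f \<in> borel_measurable borel"
proof -
  have [measurable]: "(\<lambda>z::'a. norm z powr (\<alpha> - DIM('a))) \<in> borel_measurable borel"
    by (intro powr_real_measurable) auto
  show ?thesis
    unfolding riesz_potential_def by measurable
qed

section \<open>Hedberg's inequality\<close>

definition truncated_riesz_kernel :: "real \<Rightarrow> real \<Rightarrow> 'a::euclidean_space \<Rightarrow> real" where
  "truncated_riesz_kernel \<alpha> \<delta> z = indicator (ball 0 \<delta>) z * norm z powr (\<alpha> - DIM('a))"

lemma borel_measurable_truncated_riesz_kernel [measurable]:
  "truncated_riesz_kernel \<alpha> \<delta> \<in> borel_measurable borel"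
  unfolding truncated_riesz_kernel_def
  by (intro borel_measurable_times borel_measurable_indicator powr_real_measurable) auto

lemma truncated_riesz_kernel_nonneg: "0 \<le> truncated_riesz_kernel \<alpha> \<delta> z"
  by (simp add: truncated_riesz_kernel_def)

lemma riesz_potential_le_truncated:
  fixes f :: "'a::euclidean_space \<Rightarrow> real" and \<alpha> \<delta> :: real
  assumes [measurable]: "f \<in> borel_measurable borel" and f_nonneg: "\<And>y. 0 \<le> f y"
    and \<delta>: "0 < \<delta>" and \<alpha>: "\<alpha> \<le> DIM('a)"
  shows "riesz_potential \<alpha> f x
    \<le> (\<integral>\<^sup>+y. ennreal (f y * truncated_riesz_kernel \<alpha> \<delta> (x - y)) \<partial>lborel)
      + (\<integral>\<^sup>+y. ennreal (f y) \<partial>lborel) * ennreal (\<delta> powr (\<alpha> - DIM('a)))"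
proof -
  have kernel: "norm z powr (\<alpha> - DIM('a)) \<le> truncated_riesz_kernel \<alpha> \<delta> z + \<delta> powr (\<alpha> - DIM('a))"
    for z :: 'a
  proof (cases "norm z < \<delta>")
    case False
    then have "norm z powr (\<alpha> - DIM('a)) \<le> \<delta> powr (\<alpha> - DIM('a))"
      using \<delta> \<alpha> by (intro powr_mono2') auto
    then show ?thesis
      using False by (simp add: truncated_riesz_kernel_def)
  qed (simp add: truncated_riesz_kernel_def)
  have "riesz_potential \<alpha> f x \<le> (\<integral>\<^sup>+y. ennreal (f y * truncated_riesz_kernel \<alpha> \<delta> (x - y))
      + ennreal (f y) * ennreal (\<delta> powr (\<alpha> - DIM('a))) \<partial>lborel)"
    unfolding riesz_potential_def
  proof (intro nn_integral_mono)
    fix y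
    have "f y * norm (x - y) powr (\<alpha> - DIM('a))
        \<le> f y * truncated_riesz_kernel \<alpha> \<delta> (x - y) + f y * \<delta> powr (\<alpha> - DIM('a))"
      using mult_left_mono[OF kernel f_nonneg] by (simp add: distrib_left)
    then have "ennreal (f y * norm (x - y) powr (\<alpha> - DIM('a)))
        \<le> ennreal (f y * truncated_riesz_kernel \<alpha> \<delta> (x - y) + f y * \<delta> powr (\<alpha> - DIM('a)))"
      by (rule ennreal_leI)
    then show "ennreal (f y * norm (x - y) powr (\<alpha> - DIM('a)))
        \<le> ennreal (f y * truncated_riesz_kernel \<alpha> \<delta> (x - y)) + ennreal (f y) * ennreal (\<delta> powr (\<alpha> - DIM('a)))"
      using f_nonneg[of y] truncated_riesz_kernel_nonneg[of \<alpha> \<delta> "x - y"] by (simp add: ennreal_mult)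
  qed
  also have "\<dots> = (\<integral>\<^sup>+y. ennreal (f y * truncated_riesz_kernel \<alpha> \<delta> (x - y)) \<partial>lborel)
      + (\<integral>\<^sup>+y. ennreal (f y) \<partial>lborel) * ennreal (\<delta> powr (\<alpha> - DIM('a)))"
    by (simp add: nn_integral_add nn_integral_multc)
  finally show ?thesis .
qed

lemma truncated_riesz_potential_L2_le:
  fixes f :: "'a::euclidean_space \<Rightarrow> real" and \<alpha> \<delta> :: real
  assumes [measurable]: "f \<in> borel_measurable borel" and f_nonneg: "\<And>y. 0 \<le> f y"
    and \<delta>: "0 < \<delta>" and \<alpha>: "0 < \<alpha>" "\<alpha> < DIM('a)"
  shows "(\<integral>\<^sup>+x. (\<integral>\<^sup>+y. ennreal (f y * truncated_riesz_kernel \<alpha> \<delta> (x - y)) \<partial>lborel)\<^sup>2 \<partial>lborel)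
    \<le> ennreal ((riesz_ball_const DIM('a) \<alpha> * \<delta> powr \<alpha>)\<^sup>2) * (\<integral>\<^sup>+y. ennreal ((f y)\<^sup>2) \<partial>lborel)"
proof -
  have "(\<integral>\<^sup>+z. ennreal (truncated_riesz_kernel \<alpha> \<delta> (z::'a)) \<partial>lborel)
      = (\<integral>\<^sup>+z\<in>ball (0::'a) \<delta>. ennreal (norm z powr (\<alpha> - DIM('a))) \<partial>lborel)"
    by (intro nn_integral_cong) (simp add: truncated_riesz_kernel_def indicator_mult_ennreal mult.commute)
  also have "\<dots> \<le> ennreal (riesz_ball_const DIM('a) \<alpha> * \<delta> powr \<alpha>)"
    by (rule nn_integral_ball_norm_powr_le[OF \<delta> \<alpha>])
  finally have kernel_L1: "(\<integral>\<^sup>+z. ennreal (truncated_riesz_kernel \<alpha> \<delta> (z::'a)) \<partial>lborel)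
      \<le> ennreal (riesz_ball_const DIM('a) \<alpha> * \<delta> powr \<alpha>)" .
  have "(\<integral>\<^sup>+x. (\<integral>\<^sup>+y. ennreal (f y * truncated_riesz_kernel \<alpha> \<delta> (x - y)) \<partial>lborel)\<^sup>2 \<partial>lborel)
      \<le> (\<integral>\<^sup>+z. ennreal (truncated_riesz_kernel \<alpha> \<delta> (z::'a)) \<partial>lborel)\<^sup>2 * (\<integral>\<^sup>+y. ennreal ((f y)\<^sup>2) \<partial>lborel)"
    by (rule nn_integral_convolution_square_le) (simp_all add: f_nonneg truncated_riesz_kernel_nonneg)
  also have "\<dots> \<le> (ennreal (riesz_ball_const DIM('a) \<alpha> * \<delta> powr \<alpha>))\<^sup>2 * (\<integral>\<^sup>+y. ennreal ((f y)\<^sup>2) \<partial>lborel)"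
    by (intro mult_right_mono power_mono kernel_L1) simp_all
  finally show ?thesis
    using \<alpha> by (simp add: ennreal_power riesz_ball_const_nonneg)
qed

lemma hedberg_radius_balance:
  fixes N1 N2 \<alpha> n :: real
  assumes "0 < N1" "0 < N2" "0 < n"
  defines "\<delta> \<equiv> (N1 / N2) powr (1 / n)"
  shows "\<delta> powr \<alpha> * N2 = N1 powr (\<alpha> / n) * N2 powr (1 - \<alpha> / n)"
    and "N1 * \<delta> powr (\<alpha> - n) = N1 powr (\<alpha> / n) * N2 powr (1 - \<alpha> / n)"
proof -
  have \<delta>: "\<delta> powr x = N1 powr (x / n) / N2 powr (x / n)" for x
    using assms by (simp add: \<delta>_def powr_powr powr_divide)
  show "\<delta> powr \<alpha> * N2 = N1 powr (\<alpha> / n) * N2 powr (1 - \<alpha> / n)"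
    using assms(1-3) by (simp add: \<delta> powr_diff)
  show "N1 * \<delta> powr (\<alpha> - n) = N1 powr (\<alpha> / n) * N2 powr (1 - \<alpha> / n)"
    using assms(1-3) by (simp add: \<delta> powr_diff diff_divide_distrib)
qed

lemma riesz_potential_set_L2_le:
  fixes f :: "'a::euclidean_space \<Rightarrow> real" and S :: "'a set" and \<alpha> N1 N2 :: real
  assumes f: "f \<in> borel_measurable borel" and [measurable]: "S \<in> sets borel"
    and f_nonneg: "\<And>y. 0 \<le> f y" and \<alpha>: "0 < \<alpha>" "\<alpha> < DIM('a)"
    and N1: "(\<integral>\<^sup>+y. ennreal (f y) \<partial>lborel) = ennreal N1" "0 < N1"
    and N2: "(\<integral>\<^sup>+y. ennreal ((f y)\<^sup>2) \<partial>lborel) = ennreal (N2\<^sup>2)" "0 < N2"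
  shows "(\<integral>\<^sup>+x\<in>S. (riesz_potential \<alpha> f x)\<^sup>2 \<partial>lborel)
    \<le> 2 * (ennreal ((riesz_ball_const DIM('a) \<alpha>)\<^sup>2) + emeasure lborel S)
        * ennreal ((N1 powr (\<alpha> / DIM('a)) * N2 powr (1 - \<alpha> / DIM('a)))\<^sup>2)"
proof -
  note f[measurable]
  define K where "K = riesz_ball_const DIM('a) \<alpha>"
  define Q where "Q = N1 powr (\<alpha> / DIM('a)) * N2 powr (1 - \<alpha> / DIM('a))"
  define \<delta> where "\<delta> = (N1 / N2) powr (1 / DIM('a))"
  define near where "near x = (\<integral>\<^sup>+y. ennreal (f y * truncated_riesz_kernel \<alpha> \<delta> (x - y)) \<partial>lborel)" for x
  have \<delta>: "0 < \<delta>"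
    using N1 N2 by (simp add: \<delta>_def)
  have Q: "0 \<le> Q"
    by (simp add: Q_def)
  have balance: "\<delta> powr \<alpha> * N2 = Q" "N1 * \<delta> powr (\<alpha> - DIM('a)) = Q"
    using hedberg_radius_balance[OF N1(2) N2(2), of "DIM('a)"] by (simp_all add: \<delta>_def Q_def)
  have [measurable]: "near \<in> borel_measurable borel"
    unfolding near_def by measurable
  have split: "riesz_potential \<alpha> f x \<le> near x + ennreal Q" for x
    using riesz_potential_le_truncated[OF f f_nonneg \<delta>, of \<alpha> x] \<alpha> N1
    by (simp add: near_def balance ennreal_mult[symmetric])
  have near_L2: "(\<integral>\<^sup>+x. (near x)\<^sup>2 \<partial>lborel) \<le> ennreal ((K * Q)\<^sup>2)"
    using truncated_riesz_potential_L2_le[OF f f_nonneg \<delta> \<alpha>] N2 \<alpha>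
    by (simp add: near_def K_def ennreal_mult[symmetric] power_mult_distrib
      flip: balance(1) mult.assoc)
  have "(\<integral>\<^sup>+x\<in>S. (riesz_potential \<alpha> f x)\<^sup>2 \<partial>lborel)
      \<le> (\<integral>\<^sup>+x. 2 * (near x)\<^sup>2 + 2 * ennreal (Q\<^sup>2) * indicator S x \<partial>lborel)"
  proof (intro nn_integral_mono)
    fix x
    have "(riesz_potential \<alpha> f x)\<^sup>2 \<le> (near x + ennreal Q)\<^sup>2"
      by (intro power_mono split) simp
    also have "\<dots> \<le> 2 * (near x)\<^sup>2 + 2 * ennreal (Q\<^sup>2)"
      using ennreal_add_square_le[of "near x" "ennreal Q"] Q by (simp add: ennreal_power)
    finally show "(riesz_potential \<alpha> f x)\<^sup>2 * indicator S x \<le> 2 * (near x)\<^sup>2 + 2 * ennreal (Q\<^sup>2) * indicator S x"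
      by (cases "x \<in> S") simp_all
  qed
  also have "\<dots> = 2 * (\<integral>\<^sup>+x. (near x)\<^sup>2 \<partial>lborel) + 2 * ennreal (Q\<^sup>2) * emeasure lborel S"
    by (simp add: nn_integral_add nn_integral_cmult nn_integral_cmult_indicator)
  also have "\<dots> \<le> 2 * ennreal ((K * Q)\<^sup>2) + 2 * ennreal (Q\<^sup>2) * emeasure lborel S"
    by (intro add_mono mult_left_mono near_L2) simp_all
  also have "\<dots> = 2 * (ennreal (K\<^sup>2) + emeasure lborel S) * ennreal (Q\<^sup>2)"
    by (simp add: power_mult_distrib ennreal_mult distrib_left distrib_right mult_ac)
  finally show ?thesis
    by (simp add: K_def Q_def)
qed

section \<open>The extension potential\<close>

lemma borel_measurable_indicator_exp:
  fixes u :: "'a::euclidean_space \<Rightarrow> real"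
  assumes "set_borel_measurable lborel A u" and [measurable]: "A \<in> sets borel"
  shows "(\<lambda>y. indicator A y * exp (u y)) \<in> borel_measurable borel"
proof -
  have [measurable]: "(\<lambda>y. indicator A y *\<^sub>R u y) \<in> borel_measurable borel"
    using assms(1) by (simp add: set_borel_measurable_def)
  have "(\<lambda>y. indicator A y * exp (u y)) = (\<lambda>y. indicator A y * exp (indicator A y *\<^sub>R u y))"
    by (auto simp: indicator_def)
  also have "\<dots> \<in> borel_measurable borel"
    by measurable
  finally show ?thesis .
qed

lemma exp_ball_integrals:
  fixes u :: "'a::euclidean_space \<Rightarrow> real"
  assumes r: "0 < r" and u: "set_borel_measurable lborel (ball 0 r) u"
    and exp2: "set_integrable lborel (ball 0 r) (\<lambda>y. (exp (u y))\<^sup>2)"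
  defines "e \<equiv> \<lambda>y. indicator (ball 0 r) y * exp (u y)"
  shows "e \<in> borel_measurable borel"
    and "(\<integral>\<^sup>+y. ennreal (e y) \<partial>lborel) = ennreal (LINT y:ball 0 r|lborel. exp (u y))"
    and "(\<integral>\<^sup>+y. ennreal ((e y)\<^sup>2) \<partial>lborel) = ennreal (LINT y:ball 0 r|lborel. (exp (u y))\<^sup>2)"
    and "0 < (LINT y:ball 0 r|lborel. exp (u y))"
    and "0 < (LINT y:ball 0 r|lborel. (exp (u y))\<^sup>2)"
proof -
  have [measurable]: "ball (0::'a) r \<in> sets borel"
    by simp
  show e[measurable]: "e \<in> borel_measurable borel"
    unfolding e_def using u by (rule borel_measurable_indicator_exp) simp
  have e2: "(e y)\<^sup>2 = indicator (ball 0 r) y * (exp (u y))\<^sup>2" for y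
    by (simp add: e_def indicator_def)
  have ball: "ball 0 r \<in> sets lborel" "emeasure lborel (ball (0::'a) r) \<noteq> 0"
    using r by (simp_all add: emeasure_ball less_imp_neq[OF unit_ball_vol_pos, symmetric])
  have "integrable lborel (\<lambda>y. indicator (ball 0 r) y * (exp (u y))\<^sup>2)"
    using exp2 by (simp add: set_integrable_def)
  then have finite2: "(\<integral>\<^sup>+y. ennreal ((e y)\<^sup>2) \<partial>lborel) < \<infinity>"
    unfolding e2 by (simp add: integrable_iff_bounded)
  note L2 = set_nn_integral_eq_set_integral_pos[OF _ ball, of "\<lambda>y. (exp (u y))\<^sup>2", folded e2]
  show "(\<integral>\<^sup>+y. ennreal ((e y)\<^sup>2) \<partial>lborel) = ennreal (LINT y:ball 0 r|lborel. (exp (u y))\<^sup>2)"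
    and "0 < (LINT y:ball 0 r|lborel. (exp (u y))\<^sup>2)"
    using L2 finite2 by simp_all
  have "ennreal (e y) \<le> indicator (ball 0 r) y + ennreal ((e y)\<^sup>2)" for y
  proof -
    have "2 * exp (u y) \<le> 1 + (exp (u y))\<^sup>2"
      using sum_squares_bound[of 1 "exp (u y)"] by simp
    then have "exp (u y) \<le> 1 + (exp (u y))\<^sup>2"
      using exp_gt_zero[of "u y"] by linarith
    then have "ennreal (exp (u y)) \<le> ennreal (1 + (exp (u y))\<^sup>2)"
      by (rule ennreal_leI)
    then have "ennreal (exp (u y)) \<le> 1 + ennreal ((exp (u y))\<^sup>2)"
      by simp
    then show ?thesis
      by (simp add: e_def indicator_def)
  qed
  then have "(\<integral>\<^sup>+y. ennreal (e y) \<partial>lborel) \<le> emeasure lborel (ball (0::'a) r) + (\<integral>\<^sup>+y. ennreal ((e y)\<^sup>2) \<partial>lborel)"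
    by (subst nn_integral_indicator[symmetric], simp, subst nn_integral_add[symmetric])
      (auto intro: nn_integral_mono)
  then have finite1: "(\<integral>\<^sup>+y. ennreal (e y) \<partial>lborel) < \<infinity>"
    using finite2 emeasure_lborel_ball_finite[of "0::'a" r]
    by (metis ennreal_add_less_top infinity_ennreal_def order_le_less_trans)
  note L1 = set_nn_integral_eq_set_integral_pos[OF _ ball, of "\<lambda>y. exp (u y)"]
  show "(\<integral>\<^sup>+y. ennreal (e y) \<partial>lborel) = ennreal (LINT y:ball 0 r|lborel. exp (u y))"
    and "0 < (LINT y:ball 0 r|lborel. exp (u y))"
    using L1 finite1 e by (simp_all add: e_def)
qed

lemma riesz_potential_exp_ball_L2_le:
  fixes u :: "'a::euclidean_space \<Rightarrow> real" and r s :: real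
  assumes s: "0 < s" "s < 1" and r: "0 < r" "r \<le> 1"
    and u: "set_borel_measurable lborel (ball 0 r) u"
    and exp2: "set_integrable lborel (ball 0 r) (\<lambda>y. (exp (u y))\<^sup>2)"
  shows "(\<integral>\<^sup>+x\<in>ball 0 r. (riesz_potential s (\<lambda>y. indicator (ball 0 r) y * exp (u y)) x)\<^sup>2 \<partial>lborel)
    \<le> ennreal ((sqrt (2 * ((riesz_ball_const DIM('a) s)\<^sup>2 + unit_ball_vol DIM('a)))
        * ((LINT y:ball 0 r|lborel. exp (u y)) powr (s / DIM('a))
          * (sqrt (LINT y:ball 0 r|lborel. (exp (u y))\<^sup>2)) powr (1 - s / DIM('a))))\<^sup>2)"
proof -
  define e where "e = (\<lambda>y. indicator (ball 0 r) y * exp (u y))"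
  define K where "K = riesz_ball_const DIM('a) s"
  define V where "V = unit_ball_vol DIM('a)"
  define Q where "Q = (LINT y:ball 0 r|lborel. exp (u y)) powr (s / DIM('a))
    * (sqrt (LINT y:ball 0 r|lborel. (exp (u y))\<^sup>2)) powr (1 - s / DIM('a))"
  note E = exp_ball_integrals[OF r(1) u exp2, folded e_def]
  have [measurable]: "e \<in> borel_measurable borel" "ball (0::'a) r \<in> sets borel"
    using E(1) by simp_all
  have V: "0 \<le> V"
    by (simp add: V_def)
  have "(\<integral>\<^sup>+x\<in>ball 0 r. (riesz_potential s e x)\<^sup>2 \<partial>lborel)
      \<le> 2 * (ennreal (K\<^sup>2) + emeasure lborel (ball (0::'a) r)) * ennreal (Q\<^sup>2)"
    unfolding K_def Q_def
  proof (rule riesz_potential_set_L2_le)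
    show "s < real DIM('a)"
      using s DIM_positive[where 'a='a] by linarith
    show "(\<integral>\<^sup>+y. ennreal ((e y)\<^sup>2) \<partial>lborel) = ennreal ((sqrt (LINT y:ball 0 r|lborel. (exp (u y))\<^sup>2))\<^sup>2)"
      using E(3,5) by (simp add: e_def)
  qed (use E s in \<open>auto simp: e_def\<close>)
  also have "\<dots> \<le> 2 * (ennreal (K\<^sup>2) + ennreal V) * ennreal (Q\<^sup>2)"
  proof -
    have "emeasure lborel (ball (0::'a) r) \<le> ennreal V"
      using r unfolding V_def emeasure_ball[OF less_imp_le[OF r(1)]]
      by (intro ennreal_leI) (simp add: power_le_one mult_left_le)
    then show ?thesis
      by (intro mult_right_mono mult_left_mono add_left_mono) simp_all
  qed
  also have "\<dots> = ennreal (2 * (K\<^sup>2 + V)) * ennreal (Q\<^sup>2)"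
    using V by (simp add: ennreal_mult)
  also have "\<dots> = ennreal ((sqrt (2 * (K\<^sup>2 + V)) * Q)\<^sup>2)"
    using V by (simp add: power_mult_distrib ennreal_mult)
  finally show ?thesis
    by (simp add: e_def K_def V_def Q_def)
qed

lemma extension_kernel_le:
  fixes d t s n :: real
  assumes d: "0 < d" "d < 2" and t: "0 \<le> t" "t \<le> 1" and n: "1 \<le> n" and s: "0 < s" "s < 1"
  shows "1 / (d\<^sup>2 + t\<^sup>2) powr ((n - 2 * s) / 2) \<le> 5 * 2 powr n * d powr (s - n)"
proof -
  have "d\<^sup>2 \<le> 2\<^sup>2" "t\<^sup>2 \<le> 1"
    using d t by (intro power_mono power_le_one; simp)+
  then have sum_sq: "0 < d\<^sup>2 + t\<^sup>2" "d\<^sup>2 \<le> d\<^sup>2 + t\<^sup>2" "d\<^sup>2 + t\<^sup>2 \<le> 5"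
    using d by (simp_all add: add_pos_nonneg)
  have "(2::real) powr (- n) \<le> 2 powr (s - n)"
    using s by (intro powr_mono) auto
  also have "\<dots> \<le> d powr (s - n)"
    using d s n by (intro powr_mono2') auto
  finally have "(2::real) powr n * 2 powr (- n) \<le> 2 powr n * d powr (s - n)"
    by (intro mult_left_mono) auto
  then have one_le: "1 \<le> 2 powr n * d powr (s - n)"
    by (simp flip: powr_add)
  show ?thesis
  proof (cases "2 * s \<le> n")
    case True
    have "(d\<^sup>2) powr ((n - 2 * s) / 2) = d powr (n - 2 * s)"
      using d powr_powr[of d 2 "(n - 2 * s) / 2"] by (simp add: powr_numeral diff_divide_distrib)
    moreover have "(d\<^sup>2) powr ((n - 2 * s) / 2) \<le> (d\<^sup>2 + t\<^sup>2) powr ((n - 2 * s) / 2)"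
      using True sum_sq by (intro powr_mono2) auto
    ultimately have "1 / (d\<^sup>2 + t\<^sup>2) powr ((n - 2 * s) / 2) \<le> 1 / d powr (n - 2 * s)"
      using d by (intro divide_left_mono) auto
    also have "\<dots> = d powr s * d powr (s - n)"
      using d by (simp add: powr_minus_divide[symmetric] flip: powr_add)
    also have "\<dots> \<le> 2 * d powr (s - n)"
    proof -
      have "d powr s \<le> 2 powr s"
        using d s by (intro powr_mono2) auto
      also have "\<dots> \<le> 2 powr 1"
        using s by (intro powr_mono) auto
      finally show ?thesis
        by (intro mult_right_mono) auto
    qed
    also have "\<dots> \<le> 5 * 2 powr n * d powr (s - n)"
    proof -
      have "(2::real) powr 1 \<le> 2 powr n"
        using n by (intro powr_mono) auto
      then show ?thesis
        by (intro mult_right_mono) auto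
    qed
    finally show ?thesis .
  next
    case False
    have "1 / (d\<^sup>2 + t\<^sup>2) powr ((n - 2 * s) / 2) = (d\<^sup>2 + t\<^sup>2) powr ((2 * s - n) / 2)"
      using sum_sq by (simp add: powr_minus_divide[symmetric] minus_divide_left)
    also have "\<dots> \<le> 5 powr ((2 * s - n) / 2)"
      using False sum_sq by (intro powr_mono2) auto
    also have "\<dots> \<le> 5 powr 1"
      using False s n by (intro powr_mono) auto
    also have "\<dots> \<le> 5 * 2 powr n * d powr (s - n)"
      using one_le by simp
    finally show ?thesis .
  qed
qed

lemma vbar_le_riesz_potential:
  fixes u :: "'a::euclidean_space \<Rightarrow> real"
  assumes r: "r \<le> 1" and x: "x \<in> ball 0 r" and t: "0 \<le> t" "t \<le> 1"
    and s: "0 < s" "s < 1" and c: "0 \<le> c"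
    and e: "(\<lambda>y. indicator (ball 0 r) y * exp (u y)) \<in> borel_measurable borel"
  shows "vbar c s r u (x, t)
    \<le> ennreal (5 * 2 powr DIM('a) * c) * riesz_potential s (\<lambda>y. indicator (ball 0 r) y * exp (u y)) x"
proof -
  define n where "n = real DIM('a)"
  define M where "M = 5 * 2 powr n"
  have M: "0 \<le> M"
    by (simp add: M_def)
  have pointwise: "ennreal (exp (u y) / ((norm (x - y))\<^sup>2 + t\<^sup>2) powr ((n - 2 * s) / 2)) * indicator (ball 0 r) y
      \<le> ennreal M * ennreal (indicator (ball 0 r) y * exp (u y) * norm (x - y) powr (s - n))"
    if "y \<noteq> x" for y
  proof (cases "y \<in> ball 0 r")
    case True
    have "norm (x - y) \<le> norm x + norm y"
      by (rule norm_triangle_ineq4)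
    then have "norm (x - y) < 2"
      using x True r by simp
    then have "1 / ((norm (x - y))\<^sup>2 + t\<^sup>2) powr ((n - 2 * s) / 2) \<le> M * norm (x - y) powr (s - n)"
      unfolding M_def using that t s by (intro extension_kernel_le) (auto simp: n_def DIM_positive Suc_le_eq)
    then have "exp (u y) * (1 / ((norm (x - y))\<^sup>2 + t\<^sup>2) powr ((n - 2 * s) / 2))
        \<le> exp (u y) * (M * norm (x - y) powr (s - n))"
      by (rule mult_left_mono) simp
    then have "exp (u y) / ((norm (x - y))\<^sup>2 + t\<^sup>2) powr ((n - 2 * s) / 2) \<le> M * (exp (u y) * norm (x - y) powr (s - n))"
      by (simp add: mult_ac)
    then show ?thesis
      using True M by (simp add: ennreal_mult[symmetric] ennreal_leI del: ennreal_mult')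
  qed simp
  have "vbar c s r u (x, t)
      = ennreal c * (\<integral>\<^sup>+y. ennreal (exp (u y) / ((norm (x - y))\<^sup>2 + t\<^sup>2) powr ((n - 2 * s) / 2)) * indicator (ball 0 r) y \<partial>lborel)"
    by (simp add: vbar_def n_def)
  also have "\<dots> \<le> ennreal c * (\<integral>\<^sup>+y. ennreal M * ennreal (indicator (ball 0 r) y * exp (u y) * norm (x - y) powr (s - n)) \<partial>lborel)"
    using AE_lborel_singleton[of x] by (intro mult_left_mono nn_integral_mono_AE) (auto elim!: AE_mp intro: pointwise)
  also have "\<dots> = ennreal (M * c) * riesz_potential s (\<lambda>y. indicator (ball 0 r) y * exp (u y)) x"
  proof -
    have [measurable]: "(\<lambda>y. norm (x - y) powr (s - n)) \<in> borel_measurable borel"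
      by (intro powr_real_measurable) auto
    have "(\<integral>\<^sup>+y. ennreal M * ennreal (indicator (ball 0 r) y * exp (u y) * norm (x - y) powr (s - n)) \<partial>lborel)
        = ennreal M * riesz_potential s (\<lambda>y. indicator (ball 0 r) y * exp (u y)) x"
      using e by (simp add: riesz_potential_def nn_integral_cmult n_def)
    then show ?thesis
      using M c by (simp add: ennreal_mult mult_ac)
  qed
  finally show ?thesis
    by (simp add: M_def n_def)
qed

lemma nn_integral_unit_interval_powr:
  fixes a :: real
  assumes "-1 < a"
  shows "(\<integral>\<^sup>+t\<in>{0..1}. ennreal (t powr a) \<partial>lborel) = ennreal (1 / (a + 1))"
proof -
  have "((\<lambda>t. t powr a) has_integral (1 powr (a + 1) / (a + 1))) {0..1}"
    using assms by (intro has_integral_powr_from_0) auto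
  then have "(\<integral>\<^sup>+t. ennreal (indicator {0..1} t * t powr a) \<partial>lborel) = ennreal (1 / (a + 1))"
    by (subst nn_integral_has_integral_lebesgue) auto
  moreover have "(\<integral>\<^sup>+t\<in>{0..1}. ennreal (t powr a) \<partial>lborel) = (\<integral>\<^sup>+t. ennreal (indicator {0..1} t * t powr a) \<partial>lborel)"
    by (intro nn_integral_cong) (simp add: indicator_def)
  ultimately show ?thesis
    by simp
qed

lemma half_ball_weighted_nn_integral_le:
  fixes F :: "'a::euclidean_space \<times> real \<Rightarrow> ennreal" and g :: "'a \<Rightarrow> ennreal" and r s :: real
  assumes [measurable]: "g \<in> borel_measurable borel" and r: "r \<le> 1" and s: "s < 1"
    and F_le: "\<And>x t. x \<in> ball 0 r \<Longrightarrow> 0 \<le> t \<Longrightarrow> t \<le> 1 \<Longrightarrow> F (x, t) \<le> g x"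
  shows "(\<integral>\<^sup>+p\<in>half_ball r. ennreal (snd p powr (1 - 2 * s)) * (F p)\<^sup>2 \<partial>lborel)
    \<le> ennreal (1 / (2 - 2 * s)) * (\<integral>\<^sup>+x\<in>ball 0 r. (g x)\<^sup>2 \<partial>lborel)"
proof -
  define H where "H p = ((g (fst p))\<^sup>2 * indicator (ball 0 r) (fst p))
    * (ennreal (snd p powr (1 - 2 * s)) * indicator {0..1} (snd p))" for p :: "'a \<times> real"
  have [measurable]: "ball (0::'a) r \<in> sets borel"
    by simp
  have [measurable]: "H \<in> borel_measurable (lborel \<Otimes>\<^sub>M lborel)"
    unfolding H_def by measurable
  have "(\<integral>\<^sup>+p\<in>half_ball r. ennreal (snd p powr (1 - 2 * s)) * (F p)\<^sup>2 \<partial>lborel) \<le> (\<integral>\<^sup>+p. H p \<partial>lborel)"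
  proof (intro nn_integral_mono)
    fix p :: "'a \<times> real"
    obtain x t where p: "p = (x, t)"
      by fastforce
    show "ennreal (snd p powr (1 - 2 * s)) * (F p)\<^sup>2 * indicator (half_ball r) p \<le> H p"
    proof (cases "p \<in> half_ball r")
      case True
      then have "norm (x, t) < r" "0 \<le> t"
        by (auto simp: half_ball_def p)
      then have x: "x \<in> ball 0 r" and t: "0 \<le> t" "t \<le> 1"
        using norm_fst_le[of x t] norm_snd_le[of t x] r by auto
      have "(F (x, t))\<^sup>2 \<le> (g x)\<^sup>2"
        by (intro power_mono F_le x t) simp
      then have "ennreal (t powr (1 - 2 * s)) * (F (x, t))\<^sup>2 \<le> (g x)\<^sup>2 * ennreal (t powr (1 - 2 * s))"
        by (subst mult.commute) (rule mult_right_mono, simp_all)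
      then show ?thesis
        using True x t by (simp add: H_def p)
    qed simp
  qed
  also have "\<dots> = (\<integral>\<^sup>+x. (\<integral>\<^sup>+t. H (x, t) \<partial>lborel) \<partial>lborel)"
    by (simp add: lborel_prod[symmetric] lborel.nn_integral_fst)
  also have "\<dots> = (\<integral>\<^sup>+x. ennreal (1 / (2 - 2 * s)) * ((g x)\<^sup>2 * indicator (ball 0 r) x) \<partial>lborel)"
  proof (intro nn_integral_cong)
    fix x
    have "(\<integral>\<^sup>+t\<in>{0..1}. ennreal (t powr (1 - 2 * s)) \<partial>lborel) = ennreal (1 / (2 - 2 * s))"
      using nn_integral_unit_interval_powr[of "1 - 2 * s"] s by simp
    then show "(\<integral>\<^sup>+t. H (x, t) \<partial>lborel) = ennreal (1 / (2 - 2 * s)) * ((g x)\<^sup>2 * indicator (ball 0 r) x)"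
      by (simp add: H_def nn_integral_cmult mult.commute)
  qed
  also have "\<dots> = ennreal (1 / (2 - 2 * s)) * (\<integral>\<^sup>+x\<in>ball 0 r. (g x)\<^sup>2 \<partial>lborel)"
    by (rule nn_integral_cmult) measurable
  finally show ?thesis .
qed

lemma vbar_norms_le:
  fixes u :: "'a::euclidean_space \<Rightarrow> real" and r s c :: real
  assumes s: "0 < s" "s < 1" and c: "0 \<le> c" and r: "0 < r" "r \<le> 1"
    and u: "set_borel_measurable lborel (ball 0 r) u"
    and exp2: "set_integrable lborel (ball 0 r) (\<lambda>y. (exp (u y))\<^sup>2)"
  defines "A \<equiv> (\<integral>\<^sup>+p\<in>half_ball r. ennreal (snd p powr (1 - 2 * s)) * (vbar c s r u p)\<^sup>2 \<partial>lborel)"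
    and "B \<equiv> (\<integral>\<^sup>+x\<in>ball 0 r. (vbar c s r u (x, 0))\<^sup>2 \<partial>lborel)"
    and "L \<equiv> 5 * 2 powr DIM('a) * c * sqrt (2 * ((riesz_ball_const DIM('a) s)\<^sup>2 + unit_ball_vol DIM('a)))"
    and "Q \<equiv> (LINT y:ball 0 r|lborel. exp (u y)) powr (s / DIM('a))
      * (sqrt (LINT y:ball 0 r|lborel. (exp (u y))\<^sup>2)) powr (1 - s / DIM('a))"
  shows "A < \<infinity>" and "B < \<infinity>"
    and "sqrt (enn2real A) + sqrt (enn2real B) \<le> L * (sqrt (1 / (2 - 2 * s)) + 1) * Q"
proof -
  define e where "e = (\<lambda>y. indicator (ball 0 r) y * exp (u y))"
  define M where "M = 5 * 2 powr DIM('a) * c"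
  define W where "W x = ennreal M * riesz_potential s e x" for x
  have [measurable]: "e \<in> borel_measurable borel" "ball (0::'a) r \<in> sets borel"
    using exp_ball_integrals(1)[OF r(1) u exp2, folded e_def] by simp_all
  have M: "0 \<le> M"
    using c by (simp add: M_def)
  have LQ: "0 \<le> L * Q"
    using c by (simp add: L_def Q_def)
  have vbar_le: "vbar c s r u (x, t) \<le> W x" if "x \<in> ball 0 r" "0 \<le> t" "t \<le> 1" for x t
    unfolding W_def e_def M_def using that r s c exp_ball_integrals(1)[OF r(1) u exp2]
    by (intro vbar_le_riesz_potential) auto
  have W_L2: "(\<integral>\<^sup>+x\<in>ball 0 r. (W x)\<^sup>2 \<partial>lborel) \<le> ennreal ((L * Q)\<^sup>2)"
  proof -
    have "(\<integral>\<^sup>+x\<in>ball 0 r. (W x)\<^sup>2 \<partial>lborel)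
        = (\<integral>\<^sup>+x. ennreal (M\<^sup>2) * ((riesz_potential s e x)\<^sup>2 * indicator (ball 0 r) x) \<partial>lborel)"
      using M by (simp add: W_def power_mult_distrib ennreal_power mult.assoc)
    also have "\<dots> = ennreal (M\<^sup>2) * (\<integral>\<^sup>+x\<in>ball 0 r. (riesz_potential s e x)\<^sup>2 \<partial>lborel)"
      by (rule nn_integral_cmult) measurable
    also have "\<dots> \<le> ennreal (M\<^sup>2)
        * ennreal ((sqrt (2 * ((riesz_ball_const DIM('a) s)\<^sup>2 + unit_ball_vol DIM('a))) * Q)\<^sup>2)"
      unfolding e_def Q_def by (intro mult_left_mono riesz_potential_exp_ball_L2_le[OF s r u exp2]) simp
    also have "\<dots> = ennreal ((L * Q)\<^sup>2)"
      using M by (simp add: L_def M_def ennreal_mult[symmetric] power_mult_distrib)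
    finally show ?thesis .
  qed
  have "A \<le> ennreal (1 / (2 - 2 * s)) * (\<integral>\<^sup>+x\<in>ball 0 r. (W x)\<^sup>2 \<partial>lborel)"
    unfolding A_def using r s vbar_le by (intro half_ball_weighted_nn_integral_le) (simp_all add: W_def)
  also have "\<dots> \<le> ennreal (1 / (2 - 2 * s)) * ennreal ((L * Q)\<^sup>2)"
    by (intro mult_left_mono W_L2) simp
  also have "\<dots> = ennreal ((sqrt (1 / (2 - 2 * s)) * (L * Q))\<^sup>2)"
    using s by (simp add: power_mult_distrib ennreal_mult[symmetric])
  finally have A: "A < \<infinity>" "sqrt (enn2real A) \<le> sqrt (1 / (2 - 2 * s)) * (L * Q)"
    using sqrt_enn2real_le LQ s by auto
  have "B \<le> (\<integral>\<^sup>+x\<in>ball 0 r. (W x)\<^sup>2 \<partial>lborel)"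
    unfolding B_def using r vbar_le by (intro nn_integral_mono) (auto simp: indicator_def intro: power_mono)
  then have B: "B < \<infinity>" "sqrt (enn2real B) \<le> L * Q"
    using sqrt_enn2real_le W_L2 LQ order_trans by blast+
  show "A < \<infinity>" "B < \<infinity>"
    using A B by simp_all
  show "sqrt (enn2real A) + sqrt (enn2real B) \<le> L * (sqrt (1 / (2 - 2 * s)) + 1) * Q"
    using A B by (simp add: algebra_simps)
qed

theorem lemma3p2:
  fixes s c :: real
  assumes "0 < s" "s < 1" "0 < c"
  shows "\<exists>\<gamma> C. 0 < \<gamma> \<and> \<gamma> < 1 \<and> 0 < C \<and>
    (\<forall>r (u :: 'a::euclidean_space \<Rightarrow> real).
       0 < r \<and> r \<le> 1 \<and> set_borel_measurable lborel (ball 0 r) u \<and>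
       set_integrable lborel (ball 0 r) (\<lambda>y. (exp (u y))\<^sup>2) \<longrightarrow>
       (let A = (\<integral>\<^sup>+ p \<in> half_ball r. ennreal ((snd p) powr (1 - 2 * s)) * (vbar c s r u p)\<^sup>2 \<partial>lborel);
            B = (\<integral>\<^sup>+ x \<in> ball 0 r. (vbar c s r u (x, 0))\<^sup>2 \<partial>lborel)
        in A < \<infinity> \<and> B < \<infinity> \<and>
           sqrt (enn2real A) + sqrt (enn2real B)
             \<le> C * (LINT y:ball 0 r|lborel. exp (u y)) powr \<gamma>
                 * (sqrt (LINT y:ball 0 r|lborel. (exp (u y))\<^sup>2)) powr (1 - \<gamma>)))"
proof -
  define C where "C = 5 * 2 powr DIM('a) * c
    * sqrt (2 * ((riesz_ball_const DIM('a) s)\<^sup>2 + unit_ball_vol DIM('a))) * (sqrt (1 / (2 - 2 * s)) + 1)"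
  have "0 < C"
    using assms by (simp add: C_def add_nonneg_pos add_nonneg_pos[of _ 1])
  moreover have "s < real DIM('a)"
    using assms DIM_positive[where 'a='a] by linarith
  ultimately show ?thesis
    using assms vbar_norms_le[of s c _ _] unfolding C_def Let_def
    by (intro exI[of _ "s / DIM('a)"] exI conjI allI impI) (auto simp: field_simps)
qed

end
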